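(* Let $G$ be a group, let $\mathbb{F}$ be a field, and let $(W,V,\mu)$ be a partial $G$-algebra over $\mathbb{F}$. Let $Y\subseteq W$ be a $G$-invariant subset. Then there exists a unique smallest $G$-submodule $W(Y)$ of $W$ such that \[ W(Y)=\langle Y\rangle+\mu\big(S^2(W(Y)\cap V)\big), \] where $\langle Y\rangle$ denotes the $\mathbb{F}$-linear span of $Y$.
   Context: A partial $G$-algebra is a triple $(W,V,\mu)$ where $W$ is an $\mathbb{F}G$-module, $V\subseteq W$ is a $G$-submodule, and $\mu\colon S^2(V)\to W$ is a $G$-equivariant linear map from the symmetric square of $V$ to $W$. For a subspace $U\subseteq V$, $S^2(U)$ is regarded as a subspace of $S^2(V)$, and $\mu(S^2(U))$ denotes its image under $\mu$. *)

theory Defs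
  imports Complex_Main "HOL-Algebra.Group"
begin

definition G_module ::
  "('g, 'm) monoid_scheme \<Rightarrow> ('f::field \<Rightarrow> 'w::ab_group_add \<Rightarrow> 'w) \<Rightarrow> ('g \<Rightarrow> 'w \<Rightarrow> 'w) \<Rightarrow> bool"
  where "G_module G scale act \<longleftrightarrow>
     group G \<and> vector_space scale \<and>
     (\<forall>g\<in>carrier G. Vector_Spaces.linear scale scale (act g)) \<and>
     (\<forall>w. act \<one>\<^bsub>G\<^esub> w = w) \<and>
     (\<forall>g\<in>carrier G. \<forall>h\<in>carrier G. \<forall>w. act (g \<otimes>\<^bsub>G\<^esub> h) w = act g (act h w))"

definition G_submodule ::
  "('g, 'm) monoid_scheme \<Rightarrow> ('f::field \<Rightarrow> 'w::ab_group_add \<Rightarrow> 'w) \<Rightarrow> ('g \<Rightarrow> 'w \<Rightarrow> 'w) \<Rightarrow> 'w set \<Rightarrow> bool"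
  where "G_submodule G scale act U \<longleftrightarrow>
     module.subspace scale U \<and> (\<forall>g\<in>carrier G. \<forall>u\<in>U. act g u \<in> U)"

text \<open>W is the whole type 'w (a G-module), V a G-submodule,
  and the G-equivariant linear map mu : S^2(V) -> W is represented, via the universal
  property of the symmetric square, by the symmetric bilinear G-equivariant map
  b : V x V -> W with b u v = mu(u v).\<close>
definition partial_G_algebra ::
  "('g, 'm) monoid_scheme \<Rightarrow> ('f::field \<Rightarrow> 'w::ab_group_add \<Rightarrow> 'w) \<Rightarrow> ('g \<Rightarrow> 'w \<Rightarrow> 'w)
   \<Rightarrow> 'w set \<Rightarrow> ('w \<Rightarrow> 'w \<Rightarrow> 'w) \<Rightarrow> bool"
  where "partial_G_algebra G scale act V b \<longleftrightarrow>
     G_module G scale act \<and> G_submodule G scale act V \<and>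
     (\<forall>x\<in>V. \<forall>y\<in>V. b x y = b y x) \<and>
     (\<forall>x\<in>V. \<forall>y\<in>V. \<forall>z\<in>V. b (x + y) z = b x z + b y z) \<and>
     (\<forall>c. \<forall>x\<in>V. \<forall>z\<in>V. b (scale c x) z = scale c (b x z)) \<and>
     (\<forall>g\<in>carrier G. \<forall>x\<in>V. \<forall>y\<in>V. b (act g x) (act g y) = act g (b x y))"

text \<open>mu(S^2(U)) for a subspace U of V: the span of all products b u u' with u, u' in U.\<close>
definition mu_S2 :: "('f::field \<Rightarrow> 'w::ab_group_add \<Rightarrow> 'w) \<Rightarrow> ('w \<Rightarrow> 'w \<Rightarrow> 'w) \<Rightarrow> 'w set \<Rightarrow> 'w set"
  where "mu_S2 scale b U = module.span scale {b u u' | u u'. u \<in> U \<and> u' \<in> U}"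

definition set_plus_sub :: "'w::ab_group_add set \<Rightarrow> 'w set \<Rightarrow> 'w set"
  where "set_plus_sub A B = {a + c | a c. a \<in> A \<and> c \<in> B}"

end

theory Submission
  imports Defs
begin

text \<open>\<open>W(Y)\<close> is the least fixed point of the monotone operator
  \<open>M \<mapsto> \<langle>Y\<rangle> + \<mu>(S\<^sup>2(M \<inter> V))\<close>, which always yields a subspace.
  It is \<open>G\<close>-stable because each \<open>g\<close> maps the operator applied to \<open>M\<close> into the operator
  applied to \<open>gM\<close>: the part of the least fixed point whose \<open>g\<close>-translate stays inside
  it is therefore closed under the operator, hence is everything.\<close>

lemma ex1_least_fixpoint:
  assumes "mono F" and "P (lfp F)"
  shows "\<exists>!M. P M \<and> M = F M \<and> (\<forall>M'. P M' \<and> M' = F M' \<longrightarrow> M \<subseteq> M')"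
proof (rule ex1I[of _ "lfp F"])
  show "P (lfp F) \<and> lfp F = F (lfp F) \<and> (\<forall>M'. P M' \<and> M' = F M' \<longrightarrow> lfp F \<subseteq> M')"
    using assms by (metis lfp_lowerbound lfp_unfold order_refl)
next
  fix M assume M: "P M \<and> M = F M \<and> (\<forall>M'. P M' \<and> M' = F M' \<longrightarrow> M \<subseteq> M')"
  then have "lfp F \<subseteq> M"
    by (metis lfp_lowerbound order_refl)
  moreover have "M \<subseteq> lfp F"
    using M assms by (simp flip: lfp_unfold)
  ultimately show "M = lfp F" by blast
qed

lemma image_lfp_subset:
  assumes "mono F" and "\<And>A. f ` F A \<subseteq> F (f ` A)"
  shows "f ` lfp F \<subseteq> lfp F"
proof -
  define S where "S = lfp F \<inter> f -` lfp F"
  have "F S \<subseteq> F (lfp F)" and "F (f ` S) \<subseteq> F (lfp F)"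
    by (intro monoD[OF assms(1)]; auto simp: S_def)+
  then have "F S \<subseteq> lfp F" and "f ` F S \<subseteq> lfp F"
    using assms(2)[of S] by (simp_all flip: lfp_unfold[OF assms(1)])
  then have "F S \<subseteq> S"
    unfolding S_def by blast
  then have "lfp F \<subseteq> S" by (rule lfp_lowerbound)
  then show ?thesis unfolding S_def by blast
qed

lemma set_plus_sub_mono: "A \<subseteq> A' \<Longrightarrow> B \<subseteq> B' \<Longrightarrow> set_plus_sub A B \<subseteq> set_plus_sub A' B'"
  unfolding set_plus_sub_def by blast

lemma image_set_plus_sub:
  assumes "\<And>x y. f (x + y) = f x + f y"
  shows "f ` set_plus_sub A B = set_plus_sub (f ` A) (f ` B)"
  unfolding set_plus_sub_def using assms by (auto simp: image_iff) metis

lemma (in module) subspace_set_plus_sub: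
  assumes "subspace A" and "subspace B"
  shows "subspace (set_plus_sub A B)"
  unfolding subspace_def set_plus_sub_def
proof (intro conjI ballI allI)
  show "0 \<in> {a + c |a c. a \<in> A \<and> c \<in> B}"
    using assms by (metis (mono_tags, lifting) CollectI add_0 subspace_0)
next
  fix x y assume "x \<in> {a + c |a c. a \<in> A \<and> c \<in> B}" "y \<in> {a + c |a c. a \<in> A \<and> c \<in> B}"
  then obtain a c a' c' where "x = a + c" "y = a' + c'" "a \<in> A" "c \<in> B" "a' \<in> A" "c' \<in> B"
    by blast
  with assms show "x + y \<in> {a + c |a c. a \<in> A \<and> c \<in> B}"
    by (intro CollectI exI[of _ "a + a'"] exI[of _ "c + c'"]) (auto simp: subspace_add algebra_simps)
next
  fix r x assume "x \<in> {a + c |a c. a \<in> A \<and> c \<in> B}"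
  then obtain a c where "x = a + c" "a \<in> A" "c \<in> B" by blast
  with assms show "scale r x \<in> {a + c |a c. a \<in> A \<and> c \<in> B}"
    by (intro CollectI exI[of _ "scale r a"] exI[of _ "scale r c"]) (auto simp: subspace_scale scale_right_distrib)
qed

context vector_space
begin

lemma mu_S2_mono: "A \<subseteq> B \<Longrightarrow> mu_S2 scale b A \<subseteq> mu_S2 scale b B"
  unfolding mu_S2_def by (rule span_mono) blast

lemma subspace_mu_S2: "subspace (mu_S2 scale b A)"
  unfolding mu_S2_def by (rule subspace_span)

end

lemma (in Vector_Spaces.linear) image_mu_S2:
  assumes "\<And>x y. x \<in> A \<Longrightarrow> y \<in> A \<Longrightarrow> b' (f x) (f y) = f (b x y)"
  shows "f ` mu_S2 s1 b A = mu_S2 s2 b' (f ` A)"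
proof -
  have "f ` {b u u' |u u'. u \<in> A \<and> u' \<in> A} = {b' v v' |v v'. v \<in> f ` A \<and> v' \<in> f ` A}"
    using assms by (auto simp: image_iff) metis
  then show ?thesis
    unfolding mu_S2_def by (metis span_image)
qed

definition span_plus_mu_S2 ::
    "('f::field \<Rightarrow> 'w::ab_group_add \<Rightarrow> 'w) \<Rightarrow> ('w \<Rightarrow> 'w \<Rightarrow> 'w) \<Rightarrow> 'w set \<Rightarrow> 'w set \<Rightarrow> 'w set \<Rightarrow> 'w set"
  where "span_plus_mu_S2 scale b V Y M = set_plus_sub (module.span scale Y) (mu_S2 scale b (M \<inter> V))"

lemma mono_span_plus_mu_S2:
  assumes "vector_space scale"
  shows "mono (span_plus_mu_S2 scale b V Y)"
proof -
  interpret vector_space scale by (rule assms)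
  show ?thesis
    unfolding span_plus_mu_S2_def by (intro monoI set_plus_sub_mono mu_S2_mono) auto
qed

lemma subspace_span_plus_mu_S2:
  assumes "vector_space scale"
  shows "module.subspace scale (span_plus_mu_S2 scale b V Y M)"
proof -
  interpret vector_space scale by (rule assms)
  show ?thesis
    unfolding span_plus_mu_S2_def by (intro subspace_set_plus_sub subspace_span subspace_mu_S2)
qed

lemma act_image_span_plus_mu_S2:
  assumes alg: "partial_G_algebra G scale act V b"
    and Y: "\<forall>g\<in>carrier G. \<forall>y\<in>Y. act g y \<in> Y"
    and g: "g \<in> carrier G"
  shows "act g ` span_plus_mu_S2 scale b V Y M \<subseteq> span_plus_mu_S2 scale b V Y (act g ` M)"
proof -
  have "vector_space scale" and lin: "Vector_Spaces.linear scale scale (act g)"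
    and V: "\<forall>v\<in>V. act g v \<in> V"
    and equivariant: "\<forall>x\<in>V. \<forall>y\<in>V. b (act g x) (act g y) = act g (b x y)"
    using alg g unfolding partial_G_algebra_def G_module_def G_submodule_def by auto
  then interpret vector_space scale by simp
  interpret h: Vector_Spaces.linear scale scale "act g" by (rule lin)
  have "act g ` span Y = span (act g ` Y)"
    by (simp add: h.span_image)
  also have "\<dots> \<subseteq> span Y"
    using Y g by (intro span_mono) blast
  finally have span_Y: "act g ` span Y \<subseteq> span Y" .
  have "act g ` mu_S2 scale b (M \<inter> V) = mu_S2 scale b (act g ` (M \<inter> V))"
    using equivariant by (intro h.image_mu_S2) auto
  also have "\<dots> \<subseteq> mu_S2 scale b (act g ` M \<inter> V)"
    using V by (intro mu_S2_mono) blast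
  finally have mu: "act g ` mu_S2 scale b (M \<inter> V) \<subseteq> mu_S2 scale b (act g ` M \<inter> V)" .
  show ?thesis
    unfolding span_plus_mu_S2_def image_set_plus_sub[of "act g", OF h.add]
    using span_Y mu by (rule set_plus_sub_mono)
qed

theorem lemma5p2:
  fixes G :: "('g, 'm) monoid_scheme"
    and scale :: "'f::field \<Rightarrow> 'w::ab_group_add \<Rightarrow> 'w"
    and act :: "'g \<Rightarrow> 'w \<Rightarrow> 'w"
    and V :: "'w set" and b :: "'w \<Rightarrow> 'w \<Rightarrow> 'w" and Y :: "'w set"
  assumes "partial_G_algebra G scale act V b"
    and "\<forall>g\<in>carrier G. \<forall>y\<in>Y. act g y \<in> Y"
  shows "\<exists>!M. G_submodule G scale act M \<and>
           M = set_plus_sub (module.span scale Y) (mu_S2 scale b (M \<inter> V)) \<and>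
           (\<forall>M'. G_submodule G scale act M' \<and>
                 M' = set_plus_sub (module.span scale Y) (mu_S2 scale b (M' \<inter> V)) \<longrightarrow> M \<subseteq> M')"
proof -
  let ?F = "span_plus_mu_S2 scale b V Y"
  have vs: "vector_space scale"
    using assms(1) unfolding partial_G_algebra_def G_module_def by blast
  have mono: "mono ?F"
    using vs by (rule mono_span_plus_mu_S2)
  have "act g ` lfp ?F \<subseteq> lfp ?F" if "g \<in> carrier G" for g
    using mono act_image_span_plus_mu_S2[OF assms that] by (rule image_lfp_subset)
  moreover have "module.subspace scale (lfp ?F)"
    by (subst lfp_unfold[OF mono]) (rule subspace_span_plus_mu_S2[OF vs])
  ultimately have "G_submodule G scale act (lfp ?F)"
    unfolding G_submodule_def by blast
  from ex1_least_fixpoint[OF mono, of "G_submodule G scale act", OF this]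
  show ?thesis
    unfolding span_plus_mu_S2_def .
qed

end
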